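(* Let $e_1,e_2,e_3$ be nonzero integers with $e_1+e_2+e_3=0$, and let $a,b,c$ be integers with $e_1a^2+e_2b^2+e_3c^2=0$ and $a+b$, $b+c$, $c+a$ all nonzero. Then, as an identity of rational functions (indeed of polynomials) in $x,y,z$, $$(ax+by+cz)(x+y+z)-\tfrac12(a+b)(b+c)(c+a)\Bigl(\frac{x}{b+c}+\frac{y}{c+a}+\frac{z}{a+b}\Bigr)^2=\tfrac12(e_1a+e_2b+e_3c)\Bigl(\frac{x^2}{e_1}+\frac{y^2}{e_2}+\frac{z^2}{e_3}\Bigr).$$ *)

theory Defs
  imports Complex_Main
begin

end

theory Submission
  imports Defs
begin

text \<open>Expanding the left-hand side, the mixed terms cancel and the coefficient of \<open>x\<^sup>2\<close>
  is \<open>(a - b)(c - a) / (2(b + c))\<close>, cyclically for \<open>y\<^sup>2\<close> and \<open>z\<^sup>2\<close>. When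
  \<open>e\<^sub>1 + e\<^sub>2 + e\<^sub>3 = 0\<close> and \<open>e\<^sub>1a\<^sup>2 + e\<^sub>2b\<^sup>2 + e\<^sub>3c\<^sup>2 = 0\<close>, one has
  \<open>(b + c)(e\<^sub>1a + e\<^sub>2b + e\<^sub>3c) = (a - b)(c - a) e\<^sub>1\<close> (the difference of the two sides is
  \<open>e\<^sub>1a\<^sup>2 + e\<^sub>2b\<^sup>2 + e\<^sub>3c\<^sup>2 + bc(e\<^sub>1 + e\<^sub>2 + e\<^sub>3)\<close>), so these coefficients are
  \<open>(e\<^sub>1a + e\<^sub>2b + e\<^sub>3c) / (2e\<^sub>i)\<close>.\<close>

lemma conic_point_factor:
  fixes e1 e2 e3 a b c :: "'a::comm_ring_1"
  assumes "e1 + e2 + e3 = 0" and "e1 * a^2 + e2 * b^2 + e3 * c^2 = 0"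
  shows "(b + c) * (e1 * a + e2 * b + e3 * c) = (a - b) * (c - a) * e1"
proof -
  have "(b + c) * (e1 * a + e2 * b + e3 * c) - (a - b) * (c - a) * e1
      = (e1 * a^2 + e2 * b^2 + e3 * c^2) + b * c * (e1 + e2 + e3)"
    by (simp add: algebra_simps power2_eq_square)
  with assms show ?thesis
    by simp
qed

lemma half_quotients_eq:
  fixes p q s e :: "'a::field_char_0"
  assumes "q * s = p * e" and "q \<noteq> 0" and "e \<noteq> 0"
  shows "p / (2 * q) = s / (2 * e)"
  using assms by (simp add: frac_eq_eq mult.commute)

lemma diagonalize_quadratic_form:
  fixes a b c x y z :: "'a::field_char_0"
  assumes "a + b \<noteq> 0" and "b + c \<noteq> 0" and "c + a \<noteq> 0"
  shows "(a * x + b * y + c * z) * (x + y + z)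
           - (1/2) * ((a + b) * (b + c) * (c + a)) * (x / (b + c) + y / (c + a) + z / (a + b))^2
         = (a - b) * (c - a) / (2 * (b + c)) * x^2
           + (b - c) * (a - b) / (2 * (c + a)) * y^2
           + (c - a) * (b - c) / (2 * (a + b)) * z^2"
proof -
  define u v w where "u = inverse (b + c)" and "v = inverse (c + a)" and "w = inverse (a + b)"
  have inv: "u * (b + c) = 1" "v * (c + a) = 1" "w * (a + b) = 1"
    using assms by (simp_all add: u_def v_def w_def)
  have div: "x / (b + c) = x * u" "y / (c + a) = y * v" "z / (a + b) = z * w"
    by (simp_all add: u_def v_def w_def divide_inverse)
  have coeff: "(a - b) * (c - a) / (2 * (b + c)) = (a - b) * (c - a) * u / 2"
    "(b - c) * (a - b) / (2 * (c + a)) = (b - c) * (a - b) * v / 2"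
    "(c - a) * (b - c) / (2 * (a + b)) = (c - a) * (b - c) * w / 2"
    by (simp_all add: u_def v_def w_def field_simps)
  show ?thesis
    unfolding div coeff using inv by algebra
qed

lemma conic_quadratic_form_identity:
  fixes e1 e2 e3 a b c x y z :: "'a::field_char_0"
  assumes "e1 \<noteq> 0" and "e2 \<noteq> 0" and "e3 \<noteq> 0"
    and "e1 + e2 + e3 = 0"
    and "e1 * a^2 + e2 * b^2 + e3 * c^2 = 0"
    and "a + b \<noteq> 0" and "b + c \<noteq> 0" and "c + a \<noteq> 0"
  shows "(a * x + b * y + c * z) * (x + y + z)
           - (1/2) * ((a + b) * (b + c) * (c + a)) * (x / (b + c) + y / (c + a) + z / (a + b))^2
         = (1/2) * (e1 * a + e2 * b + e3 * c) * (x^2 / e1 + y^2 / e2 + z^2 / e3)"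
proof -
  define s where "s = e1 * a + e2 * b + e3 * c"
  have x_coeff: "(b + c) * s = (a - b) * (c - a) * e1"
    using conic_point_factor[OF assms(4,5)] by (simp add: s_def)
  have y_coeff: "(c + a) * s = (b - c) * (a - b) * e2"
    using conic_point_factor[of e2 e3 e1 b c a] assms(4,5) by (simp add: s_def ac_simps)
  have z_coeff: "(a + b) * s = (c - a) * (b - c) * e3"
    using conic_point_factor[of e3 e1 e2 c a b] assms(4,5) by (simp add: s_def ac_simps)
  show ?thesis
    unfolding diagonalize_quadratic_form[OF assms(6-8)] s_def [symmetric]
      half_quotients_eq[OF x_coeff assms(7,1)] half_quotients_eq[OF y_coeff assms(8,2)]
      half_quotients_eq[OF z_coeff assms(6,3)]
    by (simp add: field_simps)
qed

theorem lemma2p9: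
  fixes e1 e2 e3 a b c :: int and x y z :: real
  assumes "e1 \<noteq> 0" and "e2 \<noteq> 0" and "e3 \<noteq> 0"
    and "e1 + e2 + e3 = 0"
    and "e1 * a^2 + e2 * b^2 + e3 * c^2 = 0"
    and "a + b \<noteq> 0" and "b + c \<noteq> 0" and "c + a \<noteq> 0"
  shows "(of_int a * x + of_int b * y + of_int c * z) * (x + y + z)
           - (1/2) * of_int ((a + b) * (b + c) * (c + a))
             * (x / of_int (b + c) + y / of_int (c + a) + z / of_int (a + b))^2
         = (1/2) * of_int (e1 * a + e2 * b + e3 * c)
             * (x^2 / of_int e1 + y^2 / of_int e2 + z^2 / of_int e3)"
proof -
  have "real_of_int e1 + of_int e2 + of_int e3 = 0"
    and "real_of_int e1 * (of_int a)^2 + of_int e2 * (of_int b)^2 + of_int e3 * (of_int c)^2 = 0"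
    and "real_of_int a + of_int b \<noteq> 0" and "real_of_int b + of_int c \<noteq> 0"
    and "real_of_int c + of_int a \<noteq> 0"
    using assms by (simp_all flip: of_int_add of_int_mult of_int_power)
  from conic_quadratic_form_identity[OF _ _ _ this, of x y z] assms(1-3)
  show ?thesis by simp
qed

end
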